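(* Let $f(x)=\mathbb{E}[F(x,\omega)]$ be $\tau$-strongly convex with minimizer $x^*$. Suppose: for every $\omega$, $F(\cdot,\omega)$ is convex and $C^1$, and $f$ is $C^1$ with $L$-Lipschitz gradient; with $\bar w_{k,N_k}\triangleq\nabla f(x_k)-\frac1{N_k}\sum_{j=1}^{N_k}\nabla_xF(x_k,\omega_{j,k})$ there are $\nu_1,\nu_2>0$ such that $\mathbb{E}[\|\bar w_{k,N_k}\|^2\mid\mathcal{F}_k]\le\frac{\nu_1^2\|x_k\|^2+\nu_2^2}{N_k}$ and $\mathbb{E}[\bar w_{k,N_k}\mid\mathcal{F}_k]=0$ a.s. for all $k\ge0$; each $H_k$ is $\mathcal{F}_k$-measurable, symmetric positive definite with $\underline\lambda\mathbf{I}\preceq H_k\preceq\overline\lambda\mathbf{I}$ a.s. for constants $0<\underline\lambda\le\overline\lambda$. Let $x_{k+1}=x_k-\gamma_kH_k\frac1{N_k}\sum_{j=1}^{N_k}\nabla_xF(x_k,\omega_{j,k})$ with $\gamma_k=\frac{1}{L\overline\lambda}$ for all $k\ge0$, where $\{N_k\}_{k\ge0}$ is an increasing sequence of positive integers with $\sum_{k=0}^\infty\frac1{N_k}<\infty$ and $N_0>\frac{2\nu_1^2\overline\lambda}{\tau^2\underline\lambda}$. Then $\lim_{k\to\infty}f(x_k)=f(x^* )$ almost surely.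
   Context: $(\Omega,\mathcal{F},\mathbb{P})$ is a probability space and $F(x,\omega)$ abbreviates $F(x,\xi(\omega))$ for a random vector $\xi$; $\omega_{1,k},\dots,\omega_{N_k,k}$ are the samples at iteration $k$, $x_0$ is given, and $\mathcal{F}_k\triangleq\sigma\{x_0,\dots,x_{k-1}\}$. *)

theory Defs
  imports "HOL-Probability.Probability"
begin

definition strongly_convex_on :: "real \<Rightarrow> 'a::real_normed_vector set \<Rightarrow> ('a \<Rightarrow> real) \<Rightarrow> bool" where
  "strongly_convex_on \<tau> S f \<longleftrightarrow>
     (\<forall>x\<in>S. \<forall>y\<in>S. \<forall>t\<in>{0..1::real}.
        f ((1 - t) *\<^sub>R x + t *\<^sub>R y)
          \<le> (1 - t) * f x + t * f y - \<tau> / 2 * t * (1 - t) * (norm (x - y))\<^sup>2)"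

definition history :: "'w measure \<Rightarrow> (nat \<Rightarrow> 'w \<Rightarrow> 'a::topological_space) \<Rightarrow> nat \<Rightarrow> 'w measure" where
  "history M X k = sigma (space M) (\<Union>i\<in>{..k}. {X i -` A \<inter> space M | A. A \<in> sets borel})"

end

theory Submission
  imports Defs
begin

text \<open>With the constant step \<open>1 / (L * lamup)\<close>, the descent lemma and the symmetry of \<open>H k\<close> make
  the cross terms between \<open>gradf (x k)\<close> and the sampling error \<open>w k\<close> cancel, so pathwise
  \<open>f (x (k+1)) + lamlo / (2 L lamup) * |gradf (x k)|\<^sup>2 \<le> f (x k) + |w k|\<^sup>2 / (2 L)\<close>.
  Strong convexity gives the Polyak-Lojasiewicz bound \<open>f x - f xstar \<le> 4 / \<tau> * |gradf x|\<^sup>2\<close> and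
  \<open>|x|\<^sup>2 \<le> 8 / \<tau> * (f x - f xstar) + 2 |xstar|\<^sup>2\<close>; with the conditional variance bound, the
  expected gaps \<open>e k\<close> therefore satisfy \<open>e (k+1) + c e k \<le> e k + (A e k + B) / N k\<close>.
  As \<open>1 / N k\<close> is summable, eventually \<open>A / N k \<le> c / 2\<close>, which makes \<open>\<Sum>k. e k\<close> finite.
  By monotone convergence the gaps are then almost surely summable, hence tend to zero.\<close>

lemma inner_matrix_vector_mult_symmetric:
  fixes H :: "real^'n^'n"
  assumes "transpose H = H"
  shows "u \<bullet> (H *v w) = (H *v u) \<bullet> w"
  by (metis assms dot_lmul_matrix vector_transpose_matrix)

lemma norm_matrix_vector_mult_sq_le:
  fixes H :: "real^'n^'n"
  assumes sym: "transpose H = H" and nonneg: "\<And>u. 0 \<le> u \<bullet> (H *v u)"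
    and upper: "\<And>u. u \<bullet> (H *v u) \<le> \<Lambda> * (norm u)\<^sup>2" and "\<Lambda> > 0"
  shows "(norm (H *v v))\<^sup>2 \<le> \<Lambda> * (v \<bullet> (H *v v))"
proof -
  define z where "z = H *v v"
  define t where "t = 1 / \<Lambda>"
  have zHv: "v \<bullet> (H *v z) = z \<bullet> z"
    using inner_matrix_vector_mult_symmetric[OF sym, of v z] by (simp add: z_def)
  have "0 \<le> (v - t *\<^sub>R z) \<bullet> (H *v (v - t *\<^sub>R z))" by (rule nonneg)
  also have "\<dots> = v \<bullet> (H *v v) - 2 * t * (z \<bullet> z) + t\<^sup>2 * (z \<bullet> (H *v z))"
    using zHv by (simp add: matrix_vector_mult_diff_distrib inner_diff_left inner_diff_right
        matrix_vector_mult_scaleR algebra_simps power2_eq_square z_def)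
  also have "t\<^sup>2 * (z \<bullet> (H *v z)) \<le> t\<^sup>2 * (\<Lambda> * (norm z)\<^sup>2)"
    by (intro mult_left_mono upper) simp
  also have "\<dots> = t * (z \<bullet> z)"
    using \<open>\<Lambda> > 0\<close> by (simp add: t_def power2_norm_eq_inner power2_eq_square[of "1 / \<Lambda>"])
  finally have "z \<bullet> z / \<Lambda> \<le> v \<bullet> (H *v v)" by (simp add: t_def)
  with \<open>\<Lambda> > 0\<close> show ?thesis by (simp add: z_def power2_norm_eq_inner divide_le_eq mult.commute)
qed

lemma GDERIV_imp_has_real_derivative_along_line:
  fixes f :: "'a::real_inner \<Rightarrow> real"
  assumes "GDERIV f (x + t *\<^sub>R d) :> g"
  shows "((\<lambda>s. f (x + s *\<^sub>R d)) has_real_derivative (g \<bullet> d)) (at t)"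
proof -
  have "((\<lambda>s. x + s *\<^sub>R d) has_derivative (\<lambda>h. h *\<^sub>R d)) (at t)"
    by (auto intro!: derivative_eq_intros)
  from has_derivative_compose[OF this assms[unfolded gderiv_def]]
  show ?thesis by (simp add: has_field_derivative_def o_def inner_commute mult_commute_abs)
qed

lemma lipschitz_gradient_upper_bound:
  fixes f :: "'a::real_inner \<Rightarrow> real"
  assumes grad: "\<And>y. GDERIV f y :> gradf y"
    and lip: "\<And>y z. norm (gradf y - gradf z) \<le> L * norm (y - z)"
  shows "f (x + d) \<le> f x + gradf x \<bullet> d + L / 2 * (norm d)\<^sup>2"
proof -
  define \<phi> where "\<phi> t = f (x + t *\<^sub>R d) - t * (gradf x \<bullet> d) - L / 2 * t\<^sup>2 * (norm d)\<^sup>2" for t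
  have \<phi>_deriv: "(\<phi> has_real_derivative
      (gradf (x + t *\<^sub>R d) - gradf x) \<bullet> d - L * t * (norm d)\<^sup>2) (at t)" for t
    unfolding \<phi>_def
    by (rule derivative_eq_intros GDERIV_imp_has_real_derivative_along_line[OF grad] refl
        | simp add: power2_eq_square algebra_simps inner_diff_left)+
  have "\<phi> 1 \<le> \<phi> 0"
  proof (rule DERIV_nonpos_imp_nonincreasing[of 0 1])
    fix t :: real assume t: "0 \<le> t" "t \<le> 1"
    have "(gradf (x + t *\<^sub>R d) - gradf x) \<bullet> d \<le> norm (gradf (x + t *\<^sub>R d) - gradf x) * norm d"
      by (rule norm_cauchy_schwarz)
    also have "\<dots> \<le> L * norm (t *\<^sub>R d) * norm d"
      by (intro mult_right_mono) (use lip[of "x + t *\<^sub>R d" x] in auto)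
    also have "\<dots> = L * t * (norm d)\<^sup>2" using t by (simp add: power2_eq_square)
    finally show "\<exists>y. (\<phi> has_real_derivative y) (at t) \<and> y \<le> 0" using \<phi>_deriv[of t] by auto
  qed simp
  then show ?thesis by (simp add: \<phi>_def)
qed

lemma strongly_convex_on_imp_convex_on:
  assumes "strongly_convex_on \<tau> S f" and "\<tau> \<ge> 0" and "convex S"
  shows "convex_on S f"
proof (rule convex_onI[OF _ \<open>convex S\<close>])
  fix t :: real and x y assume "0 < t" "t < 1" "x \<in> S" "y \<in> S"
  then have "f ((1 - t) *\<^sub>R x + t *\<^sub>R y)
      \<le> (1 - t) * f x + t * f y - \<tau> / 2 * t * (1 - t) * (norm (x - y))\<^sup>2"
    using assms(1) unfolding strongly_convex_on_def by simp
  moreover have "0 \<le> \<tau> / 2 * t * (1 - t) * (norm (x - y))\<^sup>2"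
    using \<open>\<tau> \<ge> 0\<close> \<open>0 < t\<close> \<open>t < 1\<close> by simp
  ultimately show "f ((1 - t) *\<^sub>R x + t *\<^sub>R y) \<le> (1 - t) * f x + t * f y" by linarith
qed

lemma convex_on_gradient_inequality:
  fixes f :: "'a::real_inner \<Rightarrow> real"
  assumes convex: "convex_on UNIV f" and grad: "GDERIV f x :> g"
  shows "f x + g \<bullet> (y - x) \<le> f y"
proof -
  define \<phi> where "\<phi> t = f (x + t *\<^sub>R (y - x))" for t
  have "convex_on UNIV \<phi>"
  proof (rule convex_onI)
    fix t a b :: real assume "0 < t" "t < 1"
    have "\<phi> ((1 - t) *\<^sub>R a + t *\<^sub>R b)
        = f ((1 - t) *\<^sub>R (x + a *\<^sub>R (y - x)) + t *\<^sub>R (x + b *\<^sub>R (y - x)))"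
      by (simp add: \<phi>_def algebra_simps)
    also have "\<dots> \<le> (1 - t) * \<phi> a + t * \<phi> b"
      unfolding \<phi>_def using \<open>0 < t\<close> \<open>t < 1\<close> by (intro convex_onD[OF convex]) auto
    finally show "\<phi> ((1 - t) *\<^sub>R a + t *\<^sub>R b) \<le> (1 - t) * \<phi> a + t * \<phi> b" .
  qed simp
  moreover have "(\<phi> has_real_derivative g \<bullet> (y - x)) (at 0)"
    unfolding \<phi>_def by (rule GDERIV_imp_has_real_derivative_along_line) (simp add: grad)
  ultimately have "\<phi> 1 - \<phi> 0 \<ge> g \<bullet> (y - x) * (1 - 0)"
    by (intro convex_on_imp_above_tangent) auto
  then show ?thesis by (simp add: \<phi>_def)
qed

lemma strongly_convex_quadratic_growth:
  assumes "strongly_convex_on \<tau> UNIV f" and min: "\<And>y. f xs \<le> f y"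
  shows "\<tau> / 4 * (norm (x - xs))\<^sup>2 \<le> f x - f xs"
proof -
  have "f xs \<le> f ((1 - 1/2) *\<^sub>R x + (1/2) *\<^sub>R xs)" by (rule min)
  also have "\<dots> \<le> (1 - 1/2) * f x + 1/2 * f xs - \<tau> / 2 * (1/2) * (1 - 1/2) * (norm (x - xs))\<^sup>2"
    using assms(1)[unfolded strongly_convex_on_def, rule_format, of x xs "1/2"] by simp
  finally show ?thesis by simp
qed

lemma strongly_convex_norm_sq_bound:
  assumes "strongly_convex_on \<tau> UNIV f" and "\<And>y. f xs \<le> f y" and "\<tau> > 0"
  shows "(norm x)\<^sup>2 \<le> 8 / \<tau> * (f x - f xs) + 2 * (norm xs)\<^sup>2"
proof -
  have "(norm x)\<^sup>2 \<le> (norm (x - xs) + norm xs)\<^sup>2"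
    using norm_triangle_sub[of x xs] by (intro power_mono) (auto simp: add.commute)
  also have "\<dots> \<le> 2 * (norm (x - xs))\<^sup>2 + 2 * (norm xs)\<^sup>2"
    using zero_le_power2[of "norm (x - xs) - norm xs"] by (simp add: power2_eq_square algebra_simps)
  also have "(norm (x - xs))\<^sup>2 \<le> 4 / \<tau> * (f x - f xs)"
    using strongly_convex_quadratic_growth[OF assms(1,2), of x] \<open>\<tau> > 0\<close> by (simp add: field_simps)
  finally show ?thesis by simp
qed

lemma strongly_convex_gradient_dominated:
  fixes f :: "'a::real_inner \<Rightarrow> real"
  assumes sc: "strongly_convex_on \<tau> UNIV f" and "\<tau> > 0" and min: "\<And>y. f xs \<le> f y"
    and grad: "GDERIV f x :> g"
  shows "f x - f xs \<le> 4 / \<tau> * (norm g)\<^sup>2"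
proof -
  have "f x - f xs \<le> g \<bullet> (x - xs)"
    using convex_on_gradient_inequality[OF strongly_convex_on_imp_convex_on[OF sc] grad, of xs]
      \<open>\<tau> > 0\<close> by (simp add: inner_diff_right)
  also have "\<dots> \<le> norm g * norm (x - xs)" by (rule norm_cauchy_schwarz)
  also have "\<dots> = 2 / \<tau> * (norm g)\<^sup>2 + \<tau> / 8 * (norm (x - xs))\<^sup>2
      - 2 / \<tau> * (norm g - \<tau> / 4 * norm (x - xs))\<^sup>2"
    using \<open>\<tau> > 0\<close> by (simp add: power2_eq_square algebra_simps)
  also have "\<dots> \<le> 2 / \<tau> * (norm g)\<^sup>2 + \<tau> / 8 * (norm (x - xs))\<^sup>2"
    using \<open>\<tau> > 0\<close> by simp
  also have "\<dots> \<le> 2 / \<tau> * (norm g)\<^sup>2 + (f x - f xs) / 2"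
    using strongly_convex_quadratic_growth[OF sc min, of x] by simp
  finally show ?thesis using \<open>\<tau> > 0\<close> by (simp add: field_simps)
qed

lemma preconditioned_gradient_step_descent:
  fixes f :: "real^'n \<Rightarrow> real" and H :: "real^'n^'n"
  assumes grad: "\<And>y. GDERIV f y :> gradf y"
    and lip: "\<And>y z. norm (gradf y - gradf z) \<le> L * norm (y - z)" and "L > 0"
    and "0 < lamlo" "lamlo \<le> lamup"
    and sym: "transpose H = H"
    and bounds: "\<forall>v. lamlo * (norm v)\<^sup>2 \<le> v \<bullet> (H *v v) \<and> v \<bullet> (H *v v) \<le> lamup * (norm v)\<^sup>2"
  shows "f (x - (1 / (L * lamup)) *\<^sub>R (H *v g)) + lamlo / (2 * L * lamup) * (norm (gradf x))\<^sup>2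
     \<le> f x + 1 / (2 * L) * (norm (gradf x - g))\<^sup>2"
proof -
  define \<gamma> where "\<gamma> = 1 / (L * lamup)"
  define v where "v = gradf x"
  define w where "w = gradf x - g"
  have g: "g = v - w" by (simp add: v_def w_def)
  have "lamup > 0" "\<gamma> > 0" using assms by (auto simp: \<gamma>_def)
  have nonneg: "0 \<le> u \<bullet> (H *v u)" for u
    using bounds \<open>0 < lamlo\<close> by (meson order_trans mult_nonneg_nonneg less_imp_le zero_le_power2)
  have "f (x + (- \<gamma> *\<^sub>R (H *v g)))
      \<le> f x + v \<bullet> (- \<gamma> *\<^sub>R (H *v g)) + L / 2 * (norm (- \<gamma> *\<^sub>R (H *v g)))\<^sup>2"
    unfolding v_def by (rule lipschitz_gradient_upper_bound[OF grad lip])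
  also have "\<dots> = f x - \<gamma> * (v \<bullet> (H *v g)) + L / 2 * \<gamma>\<^sup>2 * (norm (H *v g))\<^sup>2"
    using \<open>\<gamma> > 0\<close> by (simp add: power_mult_distrib)
  also have "\<dots> \<le> f x - \<gamma> * (v \<bullet> (H *v g)) + L / 2 * \<gamma>\<^sup>2 * (lamup * (g \<bullet> (H *v g)))"
    using norm_matrix_vector_mult_sq_le[OF sym nonneg _ \<open>lamup > 0\<close>, of g] bounds \<open>L > 0\<close>
    by (intro add_left_mono mult_left_mono) auto
  also have "L / 2 * \<gamma>\<^sup>2 * (lamup * (g \<bullet> (H *v g))) = \<gamma> / 2 * (g \<bullet> (H *v g))"
    using \<open>L > 0\<close> \<open>lamup > 0\<close> by (simp add: \<gamma>_def power2_eq_square)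
  also have "g \<bullet> (H *v g) = v \<bullet> (H *v v) - 2 * (v \<bullet> (H *v w)) + w \<bullet> (H *v w)"
    using inner_matrix_vector_mult_symmetric[OF sym, of w v]
    by (simp add: g matrix_vector_mult_diff_distrib inner_diff_left inner_diff_right inner_commute)
  also have "v \<bullet> (H *v g) = v \<bullet> (H *v v) - v \<bullet> (H *v w)"
    by (simp add: g matrix_vector_mult_diff_distrib inner_diff_right)
  finally have "f (x - \<gamma> *\<^sub>R (H *v g)) \<le> f x - \<gamma> / 2 * (v \<bullet> (H *v v)) + \<gamma> / 2 * (w \<bullet> (H *v w))"
    by (simp add: algebra_simps)
  moreover have "\<gamma> / 2 * (lamlo * (norm v)\<^sup>2) \<le> \<gamma> / 2 * (v \<bullet> (H *v v))"
    and "\<gamma> / 2 * (w \<bullet> (H *v w)) \<le> \<gamma> / 2 * (lamup * (norm w)\<^sup>2)"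
    using bounds \<open>\<gamma> > 0\<close> by (intro mult_left_mono; simp)+
  ultimately show ?thesis
    using \<open>lamup > 0\<close> by (simp add: \<gamma>_def v_def w_def)
qed

lemma preconditioned_gradient_step_gap:
  fixes f :: "real^'n \<Rightarrow> real" and H :: "real^'n^'n"
  assumes grad: "\<And>y. GDERIV f y :> gradf y"
    and lip: "\<And>y z. norm (gradf y - gradf z) \<le> L * norm (y - z)" and "L > 0"
    and sc: "strongly_convex_on \<tau> UNIV f" and "\<tau> > 0" and min: "\<And>y. f xs \<le> f y"
    and "0 < lamlo" "lamlo \<le> lamup"
    and sym: "transpose H = H"
    and bounds: "\<forall>v. lamlo * (norm v)\<^sup>2 \<le> v \<bullet> (H *v v) \<and> v \<bullet> (H *v v) \<le> lamup * (norm v)\<^sup>2"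
  shows "f (x - (1 / (L * lamup)) *\<^sub>R (H *v g)) - f xs + lamlo * \<tau> / (8 * L * lamup) * (f x - f xs)
     \<le> f x - f xs + 1 / (2 * L) * (norm (gradf x - g))\<^sup>2"
proof -
  have "lamlo * \<tau> / (8 * L * lamup) * (f x - f xs)
      \<le> lamlo * \<tau> / (8 * L * lamup) * (4 / \<tau> * (norm (gradf x))\<^sup>2)"
    using strongly_convex_gradient_dominated[OF sc \<open>\<tau> > 0\<close> min grad] assms
    by (intro mult_left_mono) auto
  also have "\<dots> = lamlo / (2 * L * lamup) * (norm (gradf x))\<^sup>2"
    using \<open>\<tau> > 0\<close> by simp
  finally show ?thesis
    using preconditioned_gradient_step_descent[OF grad lip assms(3,7-), of x g] by simp
qed

lemma summable_of_contracting_recurrence: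
  fixes E r :: "nat \<Rightarrow> real"
  assumes E_nonneg: "\<And>k. 0 \<le> E k" and "0 < c"
    and r_nonneg: "\<And>k. 0 \<le> r k" and "summable r" and "0 \<le> A" "0 \<le> B"
    and rec: "\<And>k. E (Suc k) + c * E k \<le> E k + r k * (A * E k + B)"
  shows "summable E"
proof -
  have "(\<lambda>k. A * r k) \<longlonglongrightarrow> 0"
    using summable_LIMSEQ_zero[OF \<open>summable r\<close>] by (rule tendsto_mult_right_zero)
  then have "eventually (\<lambda>k. A * r k < c / 2) sequentially"
    using \<open>0 < c\<close> by (intro order_tendstoD) auto
  then obtain K where K: "\<And>k. k \<ge> K \<Longrightarrow> A * r k < c / 2"
    by (auto simp: eventually_sequentially)
  have tail_rec: "E (Suc k) + c / 2 * E k \<le> E k + B * r k" if "k \<ge> K" for k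
  proof -
    have "A * r k * E k \<le> c / 2 * E k"
      using K[OF that] E_nonneg by (intro mult_right_mono) auto
    moreover have "r k * (A * E k + B) = A * r k * E k + B * r k" by (simp add: algebra_simps)
    ultimately show ?thesis using rec[of k] by linarith
  qed
  have telescope: "c / 2 * (\<Sum>i<n. E (i + K)) + E (n + K) \<le> E K + B * (\<Sum>i<n. r (i + K))" for n
  proof (induction n)
    case (Suc n)
    with tail_rec[of "n + K"] show ?case by (simp add: algebra_simps)
  qed simp
  have "summable (\<lambda>i. r (i + K))"
    using \<open>summable r\<close> by (rule summable_ignore_initial_segment)
  have "summable (\<lambda>i. E (i + K))"
  proof (rule summableI_nonneg_bounded)
    fix n
    have "(\<Sum>i<n. r (i + K)) \<le> (\<Sum>i. r (i + K))"
      using \<open>summable (\<lambda>i. r (i + K))\<close> r_nonneg by (intro sum_le_suminf) auto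
    then have "c / 2 * (\<Sum>i<n. E (i + K)) \<le> E K + B * (\<Sum>i. r (i + K))"
      using telescope[of n] E_nonneg[of "n + K"] \<open>0 \<le> B\<close> mult_left_mono by fastforce
    then show "(\<Sum>i<n. E (i + K)) \<le> 2 / c * (E K + B * (\<Sum>i. r (i + K)))"
      using \<open>0 < c\<close> by (simp add: field_simps)
  qed (rule E_nonneg)
  then show ?thesis by (rule summable_iff_shift[of E K, THEN iffD1])
qed

lemma suminf_finite_of_contracting_recurrence:
  fixes e :: "nat \<Rightarrow> ennreal" and r :: "nat \<Rightarrow> real"
  assumes "e 0 < \<infinity>" and "0 < c"
    and r_nonneg: "\<And>k. 0 \<le> r k" and "summable r" and "0 \<le> A" "0 \<le> B"
    and rec: "\<And>k. e (Suc k) + ennreal c * e k \<le> e k + ennreal (r k) * (ennreal A * e k + ennreal B)"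
  shows "(\<Sum>k. e k) < \<infinity>"
proof -
  have finite: "e k < \<infinity>" for k
  proof (induction k)
    case (Suc k)
    have "e (Suc k) \<le> e (Suc k) + ennreal c * e k" by simp
    also have "\<dots> \<le> e k + ennreal (r k) * (ennreal A * e k + ennreal B)" by (rule rec)
    also have "\<dots> < \<infinity>" using Suc by (simp add: ennreal_mult_less_top)
    finally show ?case .
  qed (rule \<open>e 0 < \<infinity>\<close>)
  define E where "E k = enn2real (e k)" for k
  have e_eq: "e k = ennreal (E k)" for k
    using finite[of k] by (simp add: E_def ennreal_enn2real less_top)
  have E_nonneg: "0 \<le> E k" for k by (simp add: E_def)
  have "E (Suc k) + c * E k \<le> E k + r k * (A * E k + B)" for k
  proof -
    have "ennreal (E (Suc k) + c * E k) = e (Suc k) + ennreal c * e k"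
      using \<open>0 < c\<close> E_nonneg by (simp add: e_eq ennreal_plus ennreal_mult)
    also have "\<dots> \<le> e k + ennreal (r k) * (ennreal A * e k + ennreal B)" by (rule rec)
    also have "\<dots> = ennreal (E k + r k * (A * E k + B))"
      using r_nonneg[of k] \<open>0 \<le> A\<close> \<open>0 \<le> B\<close> E_nonneg[of k]
      by (simp add: e_eq ennreal_plus ennreal_mult)
    finally show ?thesis
      using r_nonneg[of k] \<open>0 \<le> A\<close> \<open>0 \<le> B\<close> E_nonneg[of k]
      by (metis ennreal_le_iff add_nonneg_nonneg mult_nonneg_nonneg)
  qed
  then have "summable E"
    by (rule summable_of_contracting_recurrence[OF E_nonneg \<open>0 < c\<close> r_nonneg \<open>summable r\<close> \<open>0 \<le> A\<close> \<open>0 \<le> B\<close>])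
  then show ?thesis
    using ennreal_suminf_neq_top[OF _ E_nonneg] by (simp add: e_eq less_top)
qed

lemma AE_tendsto_zero_of_suminf_nn_integral_finite:
  fixes Y :: "nat \<Rightarrow> 'a \<Rightarrow> real"
  assumes [measurable]: "\<And>k. Y k \<in> borel_measurable M" and Y_nonneg: "\<And>k \<omega>. 0 \<le> Y k \<omega>"
    and finite: "(\<Sum>k. \<integral>\<^sup>+\<omega>. Y k \<omega> \<partial>M) < \<infinity>"
  shows "AE \<omega> in M. (\<lambda>k. Y k \<omega>) \<longlonglongrightarrow> 0"
proof -
  have "(\<integral>\<^sup>+\<omega>. (\<Sum>k. ennreal (Y k \<omega>)) \<partial>M) = (\<Sum>k. \<integral>\<^sup>+\<omega>. Y k \<omega> \<partial>M)"
    by (rule nn_integral_suminf) measurable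
  with finite have "(\<integral>\<^sup>+\<omega>. (\<Sum>k. ennreal (Y k \<omega>)) \<partial>M) \<noteq> \<infinity>" by simp
  then have "AE \<omega> in M. (\<Sum>k. ennreal (Y k \<omega>)) \<noteq> \<infinity>"
    by (rule nn_integral_PInf_AE[rotated]) measurable
  then show ?thesis
  proof eventually_elim
    case (elim \<omega>)
    then have "summable (\<lambda>k. Y k \<omega>)" using Y_nonneg by (intro summable_suminf_not_top) auto
    then show ?case by (rule summable_LIMSEQ_zero)
  qed
qed

lemma AE_tendsto_zero_of_expected_recurrence:
  fixes Y Z :: "nat \<Rightarrow> 'a \<Rightarrow> real" and r :: "nat \<Rightarrow> real"
  assumes Y_meas: "\<And>k. Y k \<in> borel_measurable M" and Y_nonneg: "\<And>k \<omega>. 0 \<le> Y k \<omega>"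
    and Z_meas: "\<And>k. Z k \<in> borel_measurable M" and Z_nonneg: "\<And>k \<omega>. 0 \<le> Z k \<omega>"
    and Y0_finite: "(\<integral>\<^sup>+\<omega>. Y 0 \<omega> \<partial>M) < \<infinity>"
    and step: "\<And>k. AE \<omega> in M. Y (Suc k) \<omega> + c * Y k \<omega> \<le> Y k \<omega> + b * Z k \<omega>"
    and noise: "\<And>k. (\<integral>\<^sup>+\<omega>. Z k \<omega> \<partial>M)
                  \<le> ennreal (r k) * (ennreal A * (\<integral>\<^sup>+\<omega>. Y k \<omega> \<partial>M) + ennreal B)"
    and "0 < c" and "0 \<le> b" and r_nonneg: "\<And>k. 0 \<le> r k" and "summable r" and "0 \<le> A" "0 \<le> B"
  shows "AE \<omega> in M. (\<lambda>k. Y k \<omega>) \<longlonglongrightarrow> 0"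
proof -
  define e where "e k = (\<integral>\<^sup>+\<omega>. Y k \<omega> \<partial>M)" for k
  have [simp]: "(\<lambda>\<omega>. ennreal (Y k \<omega>)) \<in> borel_measurable M"
    and [simp]: "(\<lambda>\<omega>. ennreal (Z k \<omega>)) \<in> borel_measurable M" for k
    using Y_meas Z_meas by measurable
  have "0 \<le> b * A" "0 \<le> b * B" using \<open>0 \<le> b\<close> \<open>0 \<le> A\<close> \<open>0 \<le> B\<close> by simp_all
  have "e (Suc k) + ennreal c * e k \<le> e k + ennreal (r k) * (ennreal (b * A) * e k + ennreal (b * B))"
    for k
  proof -
    have "e (Suc k) + ennreal c * e k
        = (\<integral>\<^sup>+\<omega>. ennreal (Y (Suc k) \<omega>) + ennreal c * ennreal (Y k \<omega>) \<partial>M)"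
      by (subst nn_integral_add) (simp_all add: e_def nn_integral_cmult borel_measurable_times_ennreal)
    also have "\<dots> = (\<integral>\<^sup>+\<omega>. Y (Suc k) \<omega> + c * Y k \<omega> \<partial>M)"
      using Y_nonneg \<open>0 < c\<close> by (simp add: ennreal_plus ennreal_mult)
    also have "\<dots> \<le> (\<integral>\<^sup>+\<omega>. Y k \<omega> + b * Z k \<omega> \<partial>M)"
      using step[of k] by (intro nn_integral_mono_AE) (auto elim: eventually_mono intro: ennreal_leI)
    also have "\<dots> = e k + ennreal b * (\<integral>\<^sup>+\<omega>. Z k \<omega> \<partial>M)"
      using Y_nonneg Z_nonneg \<open>0 \<le> b\<close>
      by (simp add: e_def nn_integral_add nn_integral_cmult ennreal_plus ennreal_mult
          borel_measurable_times_ennreal)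
    also have "\<dots> \<le> e k + ennreal b * (ennreal (r k) * (ennreal A * e k + ennreal B))"
      using noise[of k] unfolding e_def by (intro add_left_mono mult_left_mono) auto
    also have "\<dots> = e k + ennreal (r k) * (ennreal (b * A) * e k + ennreal (b * B))"
      unfolding ennreal_mult[OF \<open>0 \<le> b\<close> \<open>0 \<le> A\<close>] ennreal_mult[OF \<open>0 \<le> b\<close> \<open>0 \<le> B\<close>]
      by (simp add: algebra_simps)
    finally show ?thesis .
  qed
  moreover have "e 0 < \<infinity>" unfolding e_def by (rule Y0_finite)
  ultimately have "(\<Sum>k. e k) < \<infinity>"
    using \<open>0 < c\<close> r_nonneg \<open>summable r\<close> \<open>0 \<le> b * A\<close> \<open>0 \<le> b * B\<close>
    by (intro suminf_finite_of_contracting_recurrence)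
  then show ?thesis
    unfolding e_def by (rule AE_tendsto_zero_of_suminf_nn_integral_finite[OF Y_meas Y_nonneg])
qed

lemma borel_measurable_vecI:
  fixes g :: "'a \<Rightarrow> real^'n"
  assumes "\<And>i. (\<lambda>\<omega>. g \<omega> $ i) \<in> borel_measurable M"
  shows "g \<in> borel_measurable M"
proof (rule borel_measurable_euclidean_space[THEN iffD2], rule ballI)
  fix b :: "real^'n" assume "b \<in> Basis"
  then obtain i where "b = axis i 1" unfolding Basis_vec_def by auto
  then show "(\<lambda>\<omega>. g \<omega> \<bullet> b) \<in> borel_measurable M"
    using assms[of i] by (simp add: inner_axis)
qed

lemma sigma_finite_subalgebra_history:
  fixes X :: "nat \<Rightarrow> 'w \<Rightarrow> 'a::topological_space"
  assumes "finite_measure M" and "\<And>k. X k \<in> borel_measurable M"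
  shows "sigma_finite_subalgebra M (history M X k)"
proof (rule finite_measure_subalgebra_is_sigma_finite)
  let ?G = "\<Union>i\<in>{..k}. {X i -` A \<inter> space M | A. A \<in> sets borel}"
  have "?G \<subseteq> sets M" using assms(2) measurable_sets by blast
  then have "?G \<subseteq> Pow (space M)" using sets.sets_into_space by blast
  have "sigma_sets (space M) ?G \<subseteq> sets M" by (rule sets.sigma_sets_subset) fact
  with \<open>?G \<subseteq> Pow (space M)\<close> have "subalgebra M (history M X k)"
    unfolding subalgebra_def history_def
    by (simp only: sets_measure_of_conv space_measure_of_conv if_True)
  with \<open>finite_measure M\<close> show "finite_measure_subalgebra M (history M X k)"
    by (simp add: finite_measure_subalgebra_def finite_measure_subalgebra_axioms_def)
qed

lemma (in sigma_finite_subalgebra) nn_integral_le_of_nn_cond_exp_le: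
  assumes "g \<in> borel_measurable M" and "AE \<omega> in M. nn_cond_exp M F g \<omega> \<le> h \<omega>"
  shows "(\<integral>\<^sup>+\<omega>. g \<omega> \<partial>M) \<le> (\<integral>\<^sup>+\<omega>. h \<omega> \<partial>M)"
proof -
  have "(\<integral>\<^sup>+\<omega>. g \<omega> \<partial>M) = (\<integral>\<^sup>+\<omega>. nn_cond_exp M F g \<omega> \<partial>M)"
    using nn_cond_exp_intg[of "\<lambda>_. 1" g] assms(1) by simp
  also have "\<dots> \<le> (\<integral>\<^sup>+\<omega>. h \<omega> \<partial>M)"
    using assms(2) by (rule nn_integral_mono_AE)
  finally show ?thesis .
qed

lemma nn_integral_error_le_optimality_gap:
  fixes X :: "'w \<Rightarrow> 'a::real_normed_vector" and W :: "'w \<Rightarrow> 'b::real_normed_vector"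
  assumes "prob_space M" and "sigma_finite_subalgebra M F"
    and W_meas: "W \<in> borel_measurable M" and fX_meas: "(\<lambda>\<omega>. f (X \<omega>)) \<in> borel_measurable M"
    and variance: "AE \<omega> in M. nn_cond_exp M F (\<lambda>\<omega>. ennreal ((norm (W \<omega>))\<^sup>2)) \<omega>
                      \<le> ennreal ((\<nu>1\<^sup>2 * (norm (X \<omega>))\<^sup>2 + \<nu>2\<^sup>2) / n)"
    and sc: "strongly_convex_on \<tau> UNIV f" and min: "\<And>y. f xs \<le> f y" and "\<tau> > 0" and "n > 0"
  shows "(\<integral>\<^sup>+\<omega>. (norm (W \<omega>))\<^sup>2 \<partial>M)
    \<le> ennreal (1 / n) * (ennreal (8 * \<nu>1\<^sup>2 / \<tau>) * (\<integral>\<^sup>+\<omega>. f (X \<omega>) - f xs \<partial>M)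
                          + ennreal (2 * \<nu>1\<^sup>2 * (norm xs)\<^sup>2 + \<nu>2\<^sup>2))"
proof -
  interpret prob_space M by fact
  interpret sigma_finite_subalgebra M F by fact
  define R where "R = 2 * \<nu>1\<^sup>2 * (norm xs)\<^sup>2 + \<nu>2\<^sup>2"
  have "0 \<le> R" by (simp add: R_def)
  have gap_nonneg: "0 \<le> f (X \<omega>) - f xs" for \<omega> using min by simp
  have ennreal_affine: "ennreal (p * (q * u + v)) = ennreal p * (ennreal q * ennreal u + ennreal v)"
    if "0 \<le> p" "0 \<le> q" "0 \<le> u" "0 \<le> v" for p q u v :: real
    using that by (simp add: ennreal_mult ennreal_plus)
  have "(\<integral>\<^sup>+\<omega>. (norm (W \<omega>))\<^sup>2 \<partial>M) \<le> (\<integral>\<^sup>+\<omega>. (\<nu>1\<^sup>2 * (norm (X \<omega>))\<^sup>2 + \<nu>2\<^sup>2) / n \<partial>M)"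
    using W_meas variance by (intro nn_integral_le_of_nn_cond_exp_le) measurable
  also have "\<dots> \<le> (\<integral>\<^sup>+\<omega>. ennreal (1 / n) * (ennreal (8 * \<nu>1\<^sup>2 / \<tau>) * (f (X \<omega>) - f xs) + R) \<partial>M)"
  proof (rule nn_integral_mono)
    fix \<omega>
    have "\<nu>1\<^sup>2 * (norm (X \<omega>))\<^sup>2 \<le> \<nu>1\<^sup>2 * (8 / \<tau> * (f (X \<omega>) - f xs) + 2 * (norm xs)\<^sup>2)"
      using strongly_convex_norm_sq_bound[OF sc min \<open>\<tau> > 0\<close>] by (intro mult_left_mono) auto
    then have "\<nu>1\<^sup>2 * (norm (X \<omega>))\<^sup>2 + \<nu>2\<^sup>2 \<le> 8 * \<nu>1\<^sup>2 / \<tau> * (f (X \<omega>) - f xs) + R"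
      by (simp add: R_def algebra_simps)
    then have "(\<nu>1\<^sup>2 * (norm (X \<omega>))\<^sup>2 + \<nu>2\<^sup>2) / n \<le> 1 / n * (8 * \<nu>1\<^sup>2 / \<tau> * (f (X \<omega>) - f xs) + R)"
      using \<open>n > 0\<close> divide_right_mono[of _ _ n] by simp
    then have "ennreal ((\<nu>1\<^sup>2 * (norm (X \<omega>))\<^sup>2 + \<nu>2\<^sup>2) / n)
        \<le> ennreal (1 / n * (8 * \<nu>1\<^sup>2 / \<tau> * (f (X \<omega>) - f xs) + R))"
      by (rule ennreal_leI)
    also have "\<dots> = ennreal (1 / n) * (ennreal (8 * \<nu>1\<^sup>2 / \<tau>) * (f (X \<omega>) - f xs) + R)"
      using \<open>n > 0\<close> \<open>\<tau> > 0\<close> gap_nonneg[of \<omega>] \<open>0 \<le> R\<close>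
      by (intro ennreal_affine) auto
    finally show "ennreal ((\<nu>1\<^sup>2 * (norm (X \<omega>))\<^sup>2 + \<nu>2\<^sup>2) / n)
        \<le> ennreal (1 / n) * (ennreal (8 * \<nu>1\<^sup>2 / \<tau>) * (f (X \<omega>) - f xs) + R)" .
  qed
  also have "\<dots> = ennreal (1 / n) * (ennreal (8 * \<nu>1\<^sup>2 / \<tau>) * (\<integral>\<^sup>+\<omega>. f (X \<omega>) - f xs \<partial>M) + R)"
    using fX_meas by (simp add: nn_integral_cmult nn_integral_add emeasure_space_1)
  finally show ?thesis by (simp add: R_def)
qed

theorem mainTheorem3:
  fixes M :: "'w measure" and S :: "'b measure"
    and F :: "real^'n \<Rightarrow> 'b \<Rightarrow> real" and gradF :: "real^'n \<Rightarrow> 'b \<Rightarrow> real^'n"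
    and f :: "real^'n \<Rightarrow> real" and gradf :: "real^'n \<Rightarrow> real^'n"
    and \<xi> :: "'w \<Rightarrow> 'b" and smp :: "nat \<Rightarrow> nat \<Rightarrow> 'w \<Rightarrow> 'b"
    and x :: "nat \<Rightarrow> 'w \<Rightarrow> real^'n" and x0 xstar :: "real^'n"
    and H :: "nat \<Rightarrow> 'w \<Rightarrow> real^'n^'n"
    and N :: "nat \<Rightarrow> nat"
    and \<tau> L \<nu>1 \<nu>2 lamlo lamup :: real
  assumes prob: "prob_space M"
    and xi_rv: "\<xi> \<in> measurable M S"
    and smp_rv: "\<And>k j. smp k j \<in> measurable M S"
    and smp_distr: "\<And>k j. distr M S (smp k j) = distr M S \<xi>"
    and F_int: "\<And>y. integrable M (\<lambda>\<omega>. F y (\<xi> \<omega>))"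
    and f_def: "\<And>y. f y = integral\<^sup>L M (\<lambda>\<omega>. F y (\<xi> \<omega>))"
    and tau_pos: "\<tau> > 0"
    and f_strong: "strongly_convex_on \<tau> UNIV f"
    and xstar_min: "\<And>y. f xstar \<le> f y"
    and F_convex: "\<And>b. convex_on UNIV (\<lambda>y. F y b)"
    and F_grad: "\<And>b y. GDERIV (\<lambda>z. F z b) y :> gradF y b"
    and F_C1: "\<And>b. continuous_on UNIV (\<lambda>y. gradF y b)"
    and f_grad: "\<And>y. GDERIV f y :> gradf y"
    and f_C1: "continuous_on UNIV gradf"
    and L_lip: "\<And>y z. norm (gradf y - gradf z) \<le> L * norm (y - z)"
    and L_pos: "L > 0"
    and nu_pos: "\<nu>1 > 0" "\<nu>2 > 0"
    and x_rv: "\<And>k. x k \<in> borel_measurable M"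
    and x_init: "\<And>\<omega>. x 0 \<omega> = x0"
    and var_bound: "\<And>k. AE \<omega> in M.
          nn_cond_exp M (history M x k)
            (\<lambda>\<omega>. ennreal ((norm (gradf (x k \<omega>)
                 - (1 / real (N k)) *\<^sub>R (\<Sum>j\<in>{1..N k}. gradF (x k \<omega>) (smp k j \<omega>))))\<^sup>2)) \<omega>
          \<le> ennreal ((\<nu>1\<^sup>2 * (norm (x k \<omega>))\<^sup>2 + \<nu>2\<^sup>2) / real (N k))"
    and mean_int: "\<And>k i. integrable M (\<lambda>\<omega>. (gradf (x k \<omega>)
                 - (1 / real (N k)) *\<^sub>R (\<Sum>j\<in>{1..N k}. gradF (x k \<omega>) (smp k j \<omega>))) $ i)"
    and mean_zero: "\<And>k i. AE \<omega> in M.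
          real_cond_exp M (history M x k)
            (\<lambda>\<omega>. (gradf (x k \<omega>)
                 - (1 / real (N k)) *\<^sub>R (\<Sum>j\<in>{1..N k}. gradF (x k \<omega>) (smp k j \<omega>))) $ i) \<omega> = 0"
    and H_meas: "\<And>k. H k \<in> borel_measurable (history M x k)"
    and lam_pos: "0 < lamlo" "lamlo \<le> lamup"
    and H_sym: "\<And>k. AE \<omega> in M. transpose (H k \<omega>) = H k \<omega>"
    and H_bounds: "\<And>k. AE \<omega> in M. \<forall>v.
          lamlo * (norm v)\<^sup>2 \<le> v \<bullet> (H k \<omega> *v v) \<and> v \<bullet> (H k \<omega> *v v) \<le> lamup * (norm v)\<^sup>2"
    and iter: "\<And>k \<omega>. x (Suc k) \<omega> = x k \<omega> - (1 / (L * lamup)) *\<^sub>R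
          (H k \<omega> *v ((1 / real (N k)) *\<^sub>R (\<Sum>j\<in>{1..N k}. gradF (x k \<omega>) (smp k j \<omega>))))"
    and N_pos: "\<And>k. N k > 0"
    and N_incr: "incseq N"
    and N_summable: "summable (\<lambda>k. 1 / real (N k))"
    and N0: "real (N 0) > 2 * \<nu>1\<^sup>2 * lamup / (\<tau>\<^sup>2 * lamlo)"
  shows "AE \<omega> in M. (\<lambda>k. f (x k \<omega>)) \<longlonglongrightarrow> f xstar"
proof -
  interpret prob_space M by (rule prob)
  define g where "g k \<omega> = (1 / real (N k)) *\<^sub>R (\<Sum>j\<in>{1..N k}. gradF (x k \<omega>) (smp k j \<omega>))" for k \<omega>
  define Y where "Y k \<omega> = f (x k \<omega>) - f xstar" for k \<omega>
  define Z where "Z k \<omega> = (norm (gradf (x k \<omega>) - g k \<omega>))\<^sup>2" for k \<omega>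
  have "continuous_on UNIV f"
    using f_grad by (auto simp: gderiv_def intro!: continuous_at_imp_continuous_on has_derivative_continuous)
  then have fx_meas: "(\<lambda>\<omega>. f (x k \<omega>)) \<in> borel_measurable M" for k
    by (rule measurable_compose[OF x_rv borel_measurable_continuous_onI])
  have w_meas: "(\<lambda>\<omega>. gradf (x k \<omega>) - g k \<omega>) \<in> borel_measurable M" for k
    using mean_int[THEN borel_measurable_integrable] by (intro borel_measurable_vecI) (simp add: g_def)
  have step: "AE \<omega> in M.
      Y (Suc k) \<omega> + lamlo * \<tau> / (8 * L * lamup) * Y k \<omega> \<le> Y k \<omega> + 1 / (2 * L) * Z k \<omega>" for k
    using H_sym[of k] H_bounds[of k]
  proof eventually_elim
    case (elim \<omega>)
    have "x (Suc k) \<omega> = x k \<omega> - (1 / (L * lamup)) *\<^sub>R (H k \<omega> *v g k \<omega>)"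
      unfolding iter g_def ..
    with preconditioned_gradient_step_gap[OF f_grad L_lip L_pos f_strong tau_pos xstar_min lam_pos elim]
    show ?case by (simp add: Y_def Z_def)
  qed
  have noise: "(\<integral>\<^sup>+\<omega>. Z k \<omega> \<partial>M) \<le> ennreal (1 / real (N k)) *
      (ennreal (8 * \<nu>1\<^sup>2 / \<tau>) * (\<integral>\<^sup>+\<omega>. Y k \<omega> \<partial>M) + ennreal (2 * \<nu>1\<^sup>2 * (norm xstar)\<^sup>2 + \<nu>2\<^sup>2))"
    for k
    using nn_integral_error_le_optimality_gap[OF prob
        sigma_finite_subalgebra_history[OF finite_measure_axioms x_rv] w_meas fx_meas _
        f_strong xstar_min tau_pos] var_bound[of k] N_pos[of k]
    by (simp add: g_def Y_def Z_def)
  have "AE \<omega> in M. (\<lambda>k. Y k \<omega>) \<longlonglongrightarrow> 0"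
  proof (rule AE_tendsto_zero_of_expected_recurrence[where Y = Y and Z = Z, OF _ _ _ _ _ step noise])
    show "Y k \<in> borel_measurable M" "Z k \<in> borel_measurable M" for k
      using fx_meas w_meas unfolding Y_def Z_def by measurable
    show "0 \<le> Y k \<omega>" "0 \<le> Z k \<omega>" for k \<omega> using xstar_min by (simp_all add: Y_def Z_def)
    show "(\<integral>\<^sup>+\<omega>. Y 0 \<omega> \<partial>M) < \<infinity>" by (simp add: Y_def x_init emeasure_space_1)
    show "summable (\<lambda>k. 1 / real (N k))" by (rule N_summable)
  qed (use lam_pos L_pos tau_pos in simp_all)
  then show ?thesis by (rule eventually_mono) (simp add: Y_def LIM_zero_cancel)
qed

end
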